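(* Let $\kappa\in(0,1)$, $\Omega\neq0$ and $0<\delta<2$ be fixed. For $\tau>0$, let $2W=2W(\tau)>0$ be the interface width of the traveling wave with speed $\Omega$, i.e. the unique positive solution of $$\frac{2(1-\kappa)^2}{\tau|\Omega|\delta}+\frac{1-\kappa}{\tau|\Omega|}\,2W=\exp\Big(\frac{1-\kappa}{\kappa\tau|\Omega|}\,2W\Big)-1.$$ Then for all sufficiently small $\tau>0$ the traveling wave is unstable, i.e. the linearized eigenvalue problem $$\tau\lambda\,Z(P)=\tau\Omega\,Z'(P)-Z(P)+\kappa^{-1}\Psi(P)Z(P)-\kappa^{-1}\int_{-\infty}^{\infty}\Psi(Q)Z(Q)\,dQ,\qquad \Psi=\mathbf{1}_{(-W,W)},$$ has an eigenvalue $\lambda$ with $\operatorname{Re}\lambda>0$ (with a bounded eigenfunction).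
   Context: The traveling waves are those of the mean-field particle dynamics $\tau\partial_t x(t,p)=\sigma(t)+\delta(p-\tfrac12)-H'(x(t,p))$, where $H'(x)=x+1$ for $x\le-\kappa$, $H'(x)=-\frac{1-\kappa}{\kappa}x$ for $|x|\le\kappa$, and $H'(x)=x-1$ for $x\ge\kappa$. These waves have the form $x(t,p)=X(p-\Omega t)$ and have a spinodal stripe (values in $(-\kappa,\kappa)$) of width $2W$. An eigenvalue of the linearized problem means a $\lambda\in\mathbb{C}$ admitting a nontrivial continuous $Z:\mathbb{R}\to\mathbb{C}$ of at most linear growth that satisfies the equation away from $P=\pm W$. Instability refers to the existence of such an eigenvalue with positive real part. *)

theory Defs
  imports "HOL-Analysis.Analysis"
begin

definition width_eq :: "real \<Rightarrow> real \<Rightarrow> real \<Rightarrow> real \<Rightarrow> real \<Rightarrow> bool" where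
  "width_eq \<kappa> \<Omega> \<delta> \<tau> W \<longleftrightarrow>
     2 * (1 - \<kappa>)^2 / (\<tau> * \<bar>\<Omega>\<bar> * \<delta>) + (1 - \<kappa>) / (\<tau> * \<bar>\<Omega>\<bar>) * (2 * W)
       = exp ((1 - \<kappa>) / (\<kappa> * \<tau> * \<bar>\<Omega>\<bar>) * (2 * W)) - 1"

definition stripe :: "real \<Rightarrow> real \<Rightarrow> real" where
  "stripe W P = (if - W < P \<and> P < W then 1 else 0)"

definition tw_eigenvalue :: "real \<Rightarrow> real \<Rightarrow> real \<Rightarrow> real \<Rightarrow> complex \<Rightarrow> bool" where
  "tw_eigenvalue \<kappa> \<Omega> \<tau> W lam \<longleftrightarrow>
     (\<exists>Z :: real \<Rightarrow> complex.
        continuous_on UNIV Z \<and> bounded (range Z) \<and> (\<exists>P. Z P \<noteq> 0) \<and>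
        (\<forall>P. P \<noteq> W \<and> P \<noteq> - W \<longrightarrow>
           (\<exists>D. (Z has_vector_derivative D) (at P) \<and>
              complex_of_real \<tau> * lam * Z P
                = complex_of_real (\<tau> * \<Omega>) * D - Z P
                  + complex_of_real (stripe W P / \<kappa>) * Z P
                  - complex_of_real (1 / \<kappa>) * integral {- W..W} Z)))"

end

theory Submission
  imports Defs "HOL-Complex_Analysis.Weierstrass_Factorization" "HOL-Real_Asymp.Real_Asymp"
begin

text \<open>Write \<open>\<Lambda> = \<tau> \<lambda>\<close> and normalise \<open>\<integral>\<^bsub>-W\<^esub>\<^bsup>W\<^esup> Z = \<kappa>\<close>. Away from \<open>P = \<plusminus>W\<close> the eigenvalue
  equation becomes the linear ODE \<open>\<tau> \<Omega> Z' = (1 + \<Lambda> - \<Psi> / \<kappa>) Z + 1\<close>, whose bounded continuous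
  solution for \<open>\<Omega> > 0\<close> is explicit: constant to the right of the stripe, exponential inside it and
  to its left. The normalisation then becomes a dispersion relation \<open>D(\<Lambda>) = \<kappa>\<close>. In the variable
  \<open>u = 2 W \<Lambda> / (\<tau> \<Omega>)\<close> it reads \<open>exp (- u) = H(u)\<close>, and the width equation forces
  \<open>H \<rightarrow> - \<delta> / 2\<close> uniformly on bounded sets as \<open>\<tau> \<rightarrow> 0\<close>, while \<open>W \<rightarrow> 0\<close> and
  \<open>W / (\<tau> \<Omega>) \<rightarrow> \<infinity>\<close>. As \<open>\<delta> < 2\<close>, the limit equation has the root \<open>- ln (\<delta> / 2) + i \<pi>\<close> with
  positive real part, and Brouwer's theorem on a small disc around it yields a root \<open>u\<close>, hence an
  eigenvalue with \<open>Re \<lambda> > 0\<close>. For \<open>\<Omega> < 0\<close> one reflects \<open>P \<mapsto> - P\<close>.\<close>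

lemma exp_neg_eq_perturbed_root:
  fixes u0 c :: complex and r :: real and H :: "complex \<Rightarrow> complex"
  assumes r: "0 < r" "r \<le> 1/2" and u0: "exp (- u0) = c"
    and H_cont: "continuous_on (cball u0 r) H"
    and H_close: "\<And>u. u \<in> cball u0 r \<Longrightarrow> norm (H u - c) \<le> r / (2 * exp (Re u0 + r))"
  obtains u where "u \<in> cball u0 r" and "exp (- u) = H u"
proof -
  define T where "T u = u + 1 - exp u * H u" for u
  have "T \<in> cball u0 r \<rightarrow> cball u0 r"
  proof
    fix u assume u: "u \<in> cball u0 r"
    define v where "v = u - u0"
    have v: "norm v \<le> r" using u by (simp add: v_def dist_norm norm_minus_commute)
    have "norm (exp v - 1 - v) \<le> r/2"
      using norm_exp_bounds_lemma[of v] v r by auto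
    moreover have "norm (exp u * (H u - c)) \<le> exp (Re u0 + r) * (r / (2 * exp (Re u0 + r)))"
    proof -
      have "Re u \<le> Re u0 + r" using v abs_Re_le_cmod[of v] by (auto simp: v_def)
      then have "norm (exp u) \<le> exp (Re u0 + r)" by (simp add: norm_exp_eq_Re)
      then show ?thesis
        unfolding norm_mult using H_close[OF u] by (intro mult_mono) auto
    qed
    moreover have "norm (T u - u0) \<le> norm (exp v - 1 - v) + norm (exp u * (H u - c))"
    proof -
      have "exp u * c = exp v" using u0 by (simp add: v_def exp_diff exp_minus field_simps)
      then have "T u - u0 = - (exp v - 1 - v) - exp u * (H u - c)"
        by (simp add: T_def v_def algebra_simps)
      then show ?thesis
        using norm_triangle_ineq4[of "- (exp v - 1 - v)" "exp u * (H u - c)"]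
        by (simp only: norm_minus_cancel)
    qed
    ultimately have "norm (T u - u0) \<le> r" by simp
    then show "T u \<in> cball u0 r" by (simp add: dist_norm norm_minus_commute)
  qed
  moreover have "continuous_on (cball u0 r) T"
    unfolding T_def by (intro continuous_intros H_cont)
  ultimately obtain u where "u \<in> cball u0 r" "T u = u"
    using brouwer_ball[OF r(1)] by metis
  moreover from \<open>T u = u\<close> have "exp (- u) = H u"
    by (simp add: T_def exp_minus field_simps)
  ultimately show ?thesis using that by blast
qed

section \<open>Explicit eigenfunctions\<close>

text \<open>The general solution of \<open>s z' = c z + 1\<close>.\<close>

definition exp_profile :: "complex \<Rightarrow> real \<Rightarrow> real \<Rightarrow> complex \<Rightarrow> real \<Rightarrow> complex" where
  "exp_profile c s x0 K x = - 1 / c + K * exp (c * of_real (x - x0) / of_real s)"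

lemma exp_profile_has_vector_derivative:
  assumes "c \<noteq> 0" "s \<noteq> 0"
  shows "(exp_profile c s x0 K has_vector_derivative (c * exp_profile c s x0 K x + 1) / of_real s)
           (at x within S)"
proof -
  have "((\<lambda>z. - 1 / c + K * exp (c * (z - of_real x0) / of_real s)) has_field_derivative
          (c * exp_profile c s x0 K x + 1) / of_real s) (at (of_real x))"
    using assms by (auto intro!: derivative_eq_intros simp: exp_profile_def field_simps)
  moreover have "exp_profile c s x0 K = (\<lambda>x. - 1 / c + K * exp (c * (of_real x - of_real x0) / of_real s))"
    by (simp add: fun_eq_iff exp_profile_def)
  ultimately show ?thesis
    using has_vector_derivative_real_field has_vector_derivative_at_within by fastforce
qed

lemma exp_profile_has_integral:
  assumes "c \<noteq> 0" "s \<noteq> 0" "a \<le> b"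
  shows "(exp_profile c s x0 K has_integral
           - of_real (b - a) / c
           + K * of_real s / c * (exp (c * of_real (b - x0) / of_real s) - exp (c * of_real (a - x0) / of_real s)))
         {a..b}"
proof -
  define G where "G x = - of_real x / c + K * of_real s / c * exp (c * of_real (x - x0) / of_real s)" for x
  have "(G has_vector_derivative exp_profile c s x0 K x) (at x within {a..b})" for x
  proof -
    have "((\<lambda>z. - z / c + K * of_real s / c * exp (c * (z - of_real x0) / of_real s)) has_field_derivative
            exp_profile c s x0 K x) (at (of_real x))"
      using assms by (auto intro!: derivative_eq_intros simp: exp_profile_def field_simps)
    moreover have "G = (\<lambda>x. - of_real x / c + K * of_real s / c * exp (c * (of_real x - of_real x0) / of_real s))"
      by (simp add: fun_eq_iff G_def)
    ultimately show ?thesis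
      using has_vector_derivative_real_field has_vector_derivative_at_within by fastforce
  qed
  from fundamental_theorem_of_calculus[OF \<open>a \<le> b\<close> this] show ?thesis
    by (simp add: G_def diff_divide_distrib algebra_simps)
qed

lemma tw_equation_at_profile:
  fixes \<Lambda> c K :: complex and Z :: "real \<Rightarrow> complex"
  assumes "\<tau> * \<Omega> \<noteq> 0" "\<kappa> \<noteq> 0"
    and c: "c = 1 + \<Lambda> - of_real (stripe W P / \<kappa>)" "c \<noteq> 0"
    and S: "open S" "P \<in> S" "\<And>x. x \<in> S \<Longrightarrow> Z x = exp_profile c (\<tau> * \<Omega>) a K x"
    and int: "integral {-W..W} Z = of_real \<kappa>"
  shows "\<exists>D. (Z has_vector_derivative D) (at P) \<and>
           of_real \<tau> * (\<Lambda> / of_real \<tau>) * Z P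
             = of_real (\<tau> * \<Omega>) * D - Z P + of_real (stripe W P / \<kappa>) * Z P
               - of_real (1 / \<kappa>) * integral {-W..W} Z"
proof (intro exI conjI)
  let ?D = "(c * Z P + 1) / of_real (\<tau> * \<Omega>)"
  have "(Z has_vector_derivative (c * exp_profile c (\<tau> * \<Omega>) a K P + 1) / of_real (\<tau> * \<Omega>)) (at P)"
    by (rule has_vector_derivative_transform_within_open
        [OF exp_profile_has_vector_derivative[OF c(2) assms(1)] S(1,2)]) (simp add: S(3))
  then show "(Z has_vector_derivative ?D) (at P)" using S by simp
  have "of_real \<tau> * (\<Lambda> / of_real \<tau>) = \<Lambda>" "of_real (\<tau> * \<Omega>) * ?D = c * Z P + 1"
    "of_real (1 / \<kappa>) * integral {-W..W} Z = 1"
    using assms(1,2) int by simp_all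
  then show "of_real \<tau> * (\<Lambda> / of_real \<tau>) * Z P
          = of_real (\<tau> * \<Omega>) * ?D - Z P + of_real (stripe W P / \<kappa>) * Z P
            - of_real (1 / \<kappa>) * integral {-W..W} Z"
    by (simp add: c(1) algebra_simps)
qed

lemma tw_eigenvalue_of_piecewise_profile:
  fixes \<kappa> \<Omega> \<tau> W :: real and \<Lambda> K\<^sub>1 K\<^sub>2 K\<^sub>3 :: complex and Z :: "real \<Rightarrow> complex"
  defines "\<mu> \<equiv> 1 + \<Lambda>" and "\<nu> \<equiv> 1 + \<Lambda> - 1 / of_real \<kappa>"
  assumes "\<tau> * \<Omega> \<noteq> 0" "\<kappa> \<noteq> 0" "\<mu> \<noteq> 0" "\<nu> \<noteq> 0"
    and "continuous_on UNIV Z" "bounded (range Z)" "Z P0 \<noteq> 0"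
    and int: "integral {-W..W} Z = of_real \<kappa>"
    and right: "\<forall>x\<in>{W<..}. Z x = exp_profile \<mu> (\<tau> * \<Omega>) a\<^sub>1 K\<^sub>1 x"
    and middle: "\<forall>x\<in>{-W<..<W}. Z x = exp_profile \<nu> (\<tau> * \<Omega>) a\<^sub>2 K\<^sub>2 x"
    and left: "\<forall>x\<in>{..<-W}. Z x = exp_profile \<mu> (\<tau> * \<Omega>) a\<^sub>3 K\<^sub>3 x"
  shows "tw_eigenvalue \<kappa> \<Omega> \<tau> W (\<Lambda> / of_real \<tau>)"
proof -
  note eq = tw_equation_at_profile[OF assms(3,4) _ _ _ _ _ int]
  have "\<exists>D. (Z has_vector_derivative D) (at P) \<and>
           of_real \<tau> * (\<Lambda> / of_real \<tau>) * Z P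
             = of_real (\<tau> * \<Omega>) * D - Z P + of_real (stripe W P / \<kappa>) * Z P
               - of_real (1 / \<kappa>) * integral {-W..W} Z"
    if P: "P \<noteq> W" "P \<noteq> - W" for P
  proof -
    consider "W < P" | "- W < P" "P < W" | "P < - W" using P by (auto simp: neq_iff)
    then show ?thesis
    proof cases
      case 1
      then show ?thesis
        by (intro eq[where S = "{W<..}"]) (use right \<open>\<mu> \<noteq> 0\<close> in \<open>auto simp: stripe_def \<mu>_def\<close>)
    next
      case 2
      then show ?thesis
        by (intro eq[where S = "{-W<..<W}"]) (use middle \<open>\<nu> \<noteq> 0\<close> in \<open>auto simp: stripe_def \<nu>_def\<close>)
    next
      case 3
      then show ?thesis
        by (intro eq[where S = "{..<-W}"]) (use left \<open>\<mu> \<noteq> 0\<close> in \<open>auto simp: stripe_def \<mu>_def\<close>)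
    qed
  qed
  then show ?thesis unfolding tw_eigenvalue_def using assms(7-9) by blast
qed

lemma bounded_range_clamped_exp:
  fixes g :: "real \<Rightarrow> complex" and \<mu> A :: complex
  assumes "continuous_on {a..b} g" "a \<le> b" "0 \<le> Re \<mu>" "0 < s"
  shows "bounded (range (\<lambda>x. g (max a (min b x)) + A * (exp (\<mu> * of_real (min x a - a) / of_real s) - 1)))"
proof (rule bounded_plus_comp)
  have "bounded (g ` {a..b})"
    using assms(1) by (intro compact_imp_bounded compact_continuous_image) auto
  then show "bounded (range (\<lambda>x. g (max a (min b x))))"
    by (rule bounded_subset) (use \<open>a \<le> b\<close> in auto)
  have "norm (A * (exp (\<mu> * of_real (min x a - a) / of_real s) - 1)) \<le> norm A * 2" for x
  proof -
    have "norm (exp (\<mu> * of_real (min x a - a) / of_real s)) \<le> 1"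
      using assms(3,4) by (simp add: norm_exp_eq_Re mult_nonneg_nonpos divide_nonpos_pos)
    then have "norm (exp (\<mu> * of_real (min x a - a) / of_real s) - 1) \<le> 2"
      using norm_triangle_ineq4[of "exp (\<mu> * of_real (min x a - a) / of_real s)" 1]
      by (simp only: norm_one)
    then show ?thesis
      unfolding norm_mult by (intro mult_left_mono) auto
  qed
  then show "bounded (range (\<lambda>x. A * (exp (\<mu> * of_real (min x a - a) / of_real s) - 1)))"
    unfolding bounded_iff by blast
qed

definition dispersion :: "real \<Rightarrow> real \<Rightarrow> real \<Rightarrow> complex \<Rightarrow> complex" where
  "dispersion \<kappa> s W \<Lambda> =
     (let \<mu> = 1 + \<Lambda>; \<nu> = \<mu> - 1 / of_real \<kappa>
      in - of_real (2 * W) / \<nu> + of_real s / (of_real \<kappa> * \<mu> * \<nu>\<^sup>2) * (1 - exp (- of_real (2 * W) * \<nu> / of_real s)))"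

lemma integral_stripe_profile:
  fixes \<kappa> s W :: real and \<Lambda> :: complex
  defines "\<mu> \<equiv> 1 + \<Lambda>" and "\<nu> \<equiv> 1 + \<Lambda> - 1 / of_real \<kappa>"
  assumes "s \<noteq> 0" "0 \<le> W" and \<mu>: "\<mu> \<noteq> 0" and \<nu>: "\<nu> \<noteq> 0"
  shows "integral {-W..W} (exp_profile \<nu> s W (1 / \<nu> - 1 / \<mu>)) = dispersion \<kappa> s W \<Lambda>"
proof -
  have "1 / \<nu> - 1 / \<mu> = (\<mu> - \<nu>) / (\<mu> * \<nu>)" using \<mu> \<nu> by (simp add: field_simps)
  also have "\<mu> - \<nu> = 1 / of_real \<kappa>" by (simp add: \<mu>_def \<nu>_def)
  finally have B: "1 / \<nu> - 1 / \<mu> = 1 / (of_real \<kappa> * \<mu> * \<nu>)" by (simp add: ac_simps)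
  have "integral {-W..W} (exp_profile \<nu> s W (1 / \<nu> - 1 / \<mu>))
          = - of_real (W - - W) / \<nu> + (1 / \<nu> - 1 / \<mu>) * of_real s / \<nu>
              * (exp (\<nu> * of_real (W - W) / of_real s) - exp (\<nu> * of_real (- W - W) / of_real s))"
    by (rule integral_unique[OF exp_profile_has_integral[OF \<nu> \<open>s \<noteq> 0\<close>]]) (use \<open>0 \<le> W\<close> in simp)
  also have "\<dots> = dispersion \<kappa> s W \<Lambda>"
    unfolding dispersion_def Let_def \<nu>_def[symmetric] unfolding \<mu>_def[symmetric] B
    by (simp add: power2_eq_square mult_ac)
  finally show ?thesis .
qed

lemma tw_eigenvalue_of_dispersion_root:
  fixes \<kappa> \<Omega> \<tau> W :: real and \<Lambda> :: complex
  assumes "\<kappa> \<noteq> 0" "0 < \<tau>" "0 < \<Omega>" "0 < W" "0 < Re \<Lambda>"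
    and \<nu>: "1 + \<Lambda> - 1 / of_real \<kappa> \<noteq> 0" and root: "dispersion \<kappa> (\<tau> * \<Omega>) W \<Lambda> = of_real \<kappa>"
  shows "tw_eigenvalue \<kappa> \<Omega> \<tau> W (\<Lambda> / of_real \<tau>)"
proof -
  define s where "s = \<tau> * \<Omega>"
  define \<mu> where "\<mu> = 1 + \<Lambda>"
  define \<nu> where "\<nu> = 1 + \<Lambda> - 1 / of_real \<kappa>"
  define g where "g = exp_profile \<nu> s W (1 / \<nu> - 1 / \<mu>)"
  define A where "A = g (- W) + 1 / \<mu>"
  \<comment> \<open>Clamping the arguments makes \<open>Z\<close> continuous by construction.\<close>
  define Z where "Z x = g (max (- W) (min W x)) + A * (exp (\<mu> * of_real (min x (- W) + W) / of_real s) - 1)" for x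
  have "0 < s" using assms by (simp add: s_def)
  have "\<mu> \<noteq> 0" using \<open>0 < Re \<Lambda>\<close> by (auto simp: \<mu>_def complex_eq_iff)
  have "\<nu> \<noteq> 0" using \<nu> by (simp add: \<nu>_def)
  have right: "\<forall>x\<in>{W<..}. Z x = exp_profile \<mu> s 0 0 x"
    using \<open>0 < W\<close> by (simp add: Z_def g_def exp_profile_def)
  have middle: "\<forall>x\<in>{-W..W}. Z x = g x"
    by (simp add: Z_def)
  have left: "\<forall>x\<in>{..<-W}. Z x = exp_profile \<mu> s (- W) A x"
    by (simp add: Z_def A_def exp_profile_def algebra_simps)
  have "continuous_on {-W..W} g"
    unfolding g_def exp_profile_def using \<open>0 < s\<close> by (intro continuous_intros) auto
  then have bounded: "bounded (range Z)"
    using bounded_range_clamped_exp[of "-W" W g \<mu> s A] \<open>0 < W\<close> \<open>0 < s\<close> \<open>0 < Re \<Lambda>\<close>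
    by (simp add: Z_def \<mu>_def)
  have continuous: "continuous_on UNIV Z"
    unfolding Z_def g_def exp_profile_def using \<open>0 < s\<close> by (intro continuous_intros) auto
  have nonzero: "Z (W + 1) \<noteq> 0"
    using right \<open>0 < W\<close> \<open>\<mu> \<noteq> 0\<close> by (simp add: exp_profile_def)
  have "integral {-W..W} Z = integral {-W..W} g"
    using middle by (intro integral_cong) simp
  also have "\<dots> = dispersion \<kappa> s W \<Lambda>"
    unfolding g_def \<mu>_def \<nu>_def
    by (rule integral_stripe_profile) (use \<open>0 < s\<close> \<open>0 < W\<close> \<open>\<mu> \<noteq> 0\<close> \<open>\<nu> \<noteq> 0\<close> in \<open>auto simp: \<mu>_def \<nu>_def\<close>)
  finally have int: "integral {-W..W} Z = of_real \<kappa>"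
    using root by (simp add: s_def)
  show ?thesis
    by (rule tw_eigenvalue_of_piecewise_profile[OF _ _ _ _ continuous bounded nonzero int
          right[unfolded \<mu>_def s_def] _ left[unfolded \<mu>_def s_def]])
      (use assms \<open>\<mu> \<noteq> 0\<close> \<open>\<nu> \<noteq> 0\<close> middle in \<open>auto simp: \<mu>_def \<nu>_def s_def g_def\<close>)
qed

lemma tw_eigenvalue_reflect:
  assumes "tw_eigenvalue \<kappa> (- \<Omega>) \<tau> W lam"
  shows "tw_eigenvalue \<kappa> \<Omega> \<tau> W lam"
proof -
  obtain Z where Z: "continuous_on UNIV Z" "bounded (range Z)" "\<exists>P. Z P \<noteq> 0"
    and eq: "\<And>P. P \<noteq> W \<Longrightarrow> P \<noteq> - W \<Longrightarrow>
           \<exists>D. (Z has_vector_derivative D) (at P) \<and>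
              complex_of_real \<tau> * lam * Z P
                = complex_of_real (\<tau> * - \<Omega>) * D - Z P + complex_of_real (stripe W P / \<kappa>) * Z P
                  - complex_of_real (1 / \<kappa>) * integral {- W..W} Z"
    using assms unfolding tw_eigenvalue_def by blast
  define Y where "Y = Z \<circ> uminus"
  have "continuous_on UNIV Y"
    unfolding Y_def by (intro continuous_on_compose continuous_intros) (use Z(1) in auto)
  moreover have "bounded (range Y)"
    using Z(2) by (rule bounded_subset) (auto simp: Y_def)
  moreover have "\<exists>P. Y P \<noteq> 0" using Z(3) by (metis Y_def comp_apply minus_minus)
  moreover have int: "integral {- W..W} Y = integral {- W..W} Z"
    using Henstock_Kurzweil_Integration.integral_reflect_real[of W "- W" Z] by (simp add: Y_def o_def)
  moreover have "\<exists>D. (Y has_vector_derivative D) (at P) \<and>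
              complex_of_real \<tau> * lam * Y P
                = complex_of_real (\<tau> * \<Omega>) * D - Y P + complex_of_real (stripe W P / \<kappa>) * Y P
                  - complex_of_real (1 / \<kappa>) * integral {- W..W} Y"
    if P: "P \<noteq> W" "P \<noteq> - W" for P
  proof -
    obtain D where D: "(Z has_vector_derivative D) (at (- P))"
      and e: "complex_of_real \<tau> * lam * Z (- P)
                = complex_of_real (\<tau> * - \<Omega>) * D - Z (- P) + complex_of_real (stripe W (- P) / \<kappa>) * Z (- P)
                  - complex_of_real (1 / \<kappa>) * integral {- W..W} Z"
      using eq[of "- P"] P by auto
    have "(Y has_vector_derivative (- 1) *\<^sub>R D) (at P)"
      unfolding Y_def by (rule vector_diff_chain_at) (auto intro!: derivative_eq_intros D)
    moreover have "stripe W (- P) = stripe W P" "Y P = Z (- P)" by (auto simp: stripe_def Y_def)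
    ultimately show ?thesis
      using e by (intro exI[of _ "- D"]) (simp add: int)
  qed
  ultimately show ?thesis unfolding tw_eigenvalue_def by blast
qed

section \<open>The interface width for small \<open>\<tau>\<close>\<close>

definition width_eq_scaled :: "real \<Rightarrow> real \<Rightarrow> real \<Rightarrow> real \<Rightarrow> bool" where
  "width_eq_scaled \<kappa> d s W \<longleftrightarrow>
     (let y = (1 - \<kappa>) / (\<kappa> * s) * (2 * W) in exp y = 1 + (1 - \<kappa>)\<^sup>2 / (d * s) + \<kappa> * y)"

lemma width_eq_iff_scaled:
  assumes "0 < \<tau>" "\<Omega> \<noteq> 0" "\<kappa> \<noteq> 0" "\<delta> \<noteq> 0"
  shows "width_eq \<kappa> \<Omega> \<delta> \<tau> W \<longleftrightarrow> width_eq_scaled \<kappa> (\<delta> / 2) (\<tau> * \<bar>\<Omega>\<bar>) W"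
proof -
  have "2 * (1 - \<kappa>)\<^sup>2 / (\<tau> * \<bar>\<Omega>\<bar> * \<delta>) = (1 - \<kappa>)\<^sup>2 / (\<delta> / 2 * (\<tau> * \<bar>\<Omega>\<bar>))"
    and "(1 - \<kappa>) / (\<tau> * \<bar>\<Omega>\<bar>) * (2 * W) = \<kappa> * ((1 - \<kappa>) / (\<kappa> * (\<tau> * \<bar>\<Omega>\<bar>)) * (2 * W))"
    and "(1 - \<kappa>) / (\<kappa> * \<tau> * \<bar>\<Omega>\<bar>) = (1 - \<kappa>) / (\<kappa> * (\<tau> * \<bar>\<Omega>\<bar>))"
    using assms by (simp_all add: field_simps)
  then show ?thesis
    unfolding width_eq_def width_eq_scaled_def Let_def by (simp only:) argo
qed

lemma width_eq_scaled_cleared: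
  assumes "width_eq_scaled \<kappa> d s W" "0 < \<kappa>" "0 < d" "0 < s"
  shows "d * (s * exp ((1 - \<kappa>) / (\<kappa> * s) * (2 * W))) = d * s + (1 - \<kappa>)\<^sup>2 + d * (1 - \<kappa>) * (2 * W)"
proof -
  define y where "y = (1 - \<kappa>) / (\<kappa> * s) * (2 * W)"
  have "exp y = 1 + (1 - \<kappa>)\<^sup>2 / (d * s) + \<kappa> * y"
    using assms(1) by (simp add: width_eq_scaled_def y_def)
  then have "d * (s * exp y) = d * s + (1 - \<kappa>)\<^sup>2 + d * (\<kappa> * y * s)"
    using assms(3,4) by (simp add: field_simps)
  moreover have "\<kappa> * y * s = (1 - \<kappa>) * (2 * W)"
    using assms(2,4) by (simp add: y_def field_simps)
  ultimately show ?thesis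
    unfolding y_def[symmetric] by simp
qed

lemma width_exponent_bounds:
  fixes \<kappa> a s y :: real
  assumes \<kappa>: "0 < \<kappa>" "\<kappa> < 1" and "0 < a" "0 < s" "0 < y"
    and width: "exp y = 1 + a / s + \<kappa> * y"
  shows "y * s \<le> sqrt (2 * s\<^sup>2 + 2 * a * s / (1 - \<kappa>))" and "ln (a / s) < y"
proof -
  have "0 < \<kappa> * y" using \<kappa> \<open>0 < y\<close> by simp
  then have "a / s < exp y" using width by linarith
  then show "ln (a / s) < y"
    using \<open>0 < a\<close> \<open>0 < s\<close> by (metis divide_pos_pos exp_gt_zero ln_exp ln_less_cancel_iff)
  have "y \<le> exp y - 1" using exp_ge_add_one_self[of y] by linarith
  then have "\<kappa> * y \<le> \<kappa> * (exp y - 1)" using \<kappa> by (intro mult_left_mono) auto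
  moreover have "(1 - \<kappa>) * (exp y - 1) = (exp y - 1) - \<kappa> * (exp y - 1)" by (simp add: algebra_simps)
  ultimately have "(1 - \<kappa>) * (exp y - 1) \<le> a / s" using width by linarith
  then have "exp y - 1 \<le> a / s / (1 - \<kappa>)"
    using \<kappa> by (subst pos_le_divide_eq) (auto simp: mult.commute)
  then have "exp y \<le> 1 + a / s / (1 - \<kappa>)" by simp
  moreover have "y\<^sup>2 \<le> 2 * exp y" using exp_lower_Taylor_quadratic[of y] \<open>0 < y\<close> by simp
  ultimately have "y\<^sup>2 * s\<^sup>2 \<le> 2 * (1 + a / s / (1 - \<kappa>)) * s\<^sup>2"
    by (intro mult_right_mono) auto
  also have "\<dots> = 2 * s\<^sup>2 + 2 * a * s / (1 - \<kappa>)"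
    using \<kappa> \<open>0 < s\<close> by (simp add: field_simps power2_eq_square)
  finally show "y * s \<le> sqrt (2 * s\<^sup>2 + 2 * a * s / (1 - \<kappa>))"
    by (intro real_le_rsqrt) (simp add: power_mult_distrib)
qed

lemma width_eq_scaled_bounds:
  fixes \<kappa> d s W :: real
  defines "a \<equiv> (1 - \<kappa>)\<^sup>2 / d"
  assumes \<kappa>: "0 < \<kappa>" "\<kappa> < 1" and "0 < d" "0 < s" "0 < W" and width: "width_eq_scaled \<kappa> d s W"
  shows "W \<le> \<kappa> / (2 * (1 - \<kappa>)) * sqrt (2 * s\<^sup>2 + 2 * a * s / (1 - \<kappa>))"
    and "0 < ln (a / s) \<Longrightarrow> s \<le> 2 * (1 - \<kappa>) / \<kappa> * (1 / ln (a / s)) * W"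
proof -
  define y where "y = (1 - \<kappa>) / (\<kappa> * s) * (2 * W)"
  have "0 < a" using \<kappa> \<open>0 < d\<close> by (simp add: a_def)
  have "0 < y" using \<kappa> \<open>0 < W\<close> \<open>0 < s\<close> by (simp add: y_def)
  moreover have "exp y = 1 + a / s + \<kappa> * y"
    using width by (simp add: width_eq_scaled_def y_def a_def)
  ultimately have ys: "y * s \<le> sqrt (2 * s\<^sup>2 + 2 * a * s / (1 - \<kappa>))" and "ln (a / s) < y"
    using width_exponent_bounds[OF \<kappa> \<open>0 < a\<close> \<open>0 < s\<close>] by auto
  have W: "W = \<kappa> / (2 * (1 - \<kappa>)) * (y * s)" using \<kappa> \<open>0 < s\<close> by (simp add: y_def field_simps)
  also have "\<dots> \<le> \<kappa> / (2 * (1 - \<kappa>)) * sqrt (2 * s\<^sup>2 + 2 * a * s / (1 - \<kappa>))"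
    using ys \<kappa> by (intro mult_left_mono) auto
  finally show "W \<le> \<kappa> / (2 * (1 - \<kappa>)) * sqrt (2 * s\<^sup>2 + 2 * a * s / (1 - \<kappa>))" .
  assume "0 < ln (a / s)"
  have "s / W = 2 * (1 - \<kappa>) / \<kappa> * (1 / y)" using \<kappa> \<open>0 < s\<close> \<open>0 < y\<close> by (simp add: W field_simps)
  also have "\<dots> \<le> 2 * (1 - \<kappa>) / \<kappa> * (1 / ln (a / s))"
    using \<kappa> \<open>0 < ln (a / s)\<close> \<open>ln (a / s) < y\<close> by (intro mult_left_mono) (auto simp: frac_le)
  finally show "s \<le> 2 * (1 - \<kappa>) / \<kappa> * (1 / ln (a / s)) * W"
    using \<open>0 < W\<close> by (simp add: pos_divide_le_eq)
qed

lemma eventually_width_small: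
  fixes \<kappa> d \<epsilon> :: real
  assumes \<kappa>: "0 < \<kappa>" "\<kappa> < 1" and "0 < d" "0 < \<epsilon>"
  shows "\<forall>\<^sub>F s in at_right 0. \<forall>W>0. width_eq_scaled \<kappa> d s W \<longrightarrow> s \<le> \<epsilon> \<and> W \<le> \<epsilon> \<and> s \<le> \<epsilon> * W"
proof -
  define a where "a = (1 - \<kappa>)\<^sup>2 / d"
  have "0 < a" using \<kappa> \<open>0 < d\<close> by (simp add: a_def)
  define w where "w s = \<kappa> / (2 * (1 - \<kappa>)) * sqrt (2 * s\<^sup>2 + 2 * a * s / (1 - \<kappa>))" for s
  define q where "q s = 2 * (1 - \<kappa>) / \<kappa> * (1 / ln (a / s))" for s
  have "(w \<longlongrightarrow> 0) (at_right 0)"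
    unfolding w_def using \<kappa> by (auto intro!: tendsto_eq_intros)
  then have "\<forall>\<^sub>F s in at_right 0. w s < \<epsilon>"
    using \<open>0 < \<epsilon>\<close> by (rule order_tendstoD(2))
  moreover have "((\<lambda>s. 1 / ln (a / s)) \<longlongrightarrow> 0) (at_right 0)"
    using \<open>0 < a\<close> by real_asymp
  then have "(q \<longlongrightarrow> 0) (at_right 0)"
    unfolding q_def by (rule tendsto_mult_right_zero)
  then have "\<forall>\<^sub>F s in at_right 0. q s < \<epsilon>"
    using \<open>0 < \<epsilon>\<close> by (rule order_tendstoD(2))
  moreover have "filterlim (\<lambda>s. ln (a / s)) at_top (at_right 0)"
    using \<open>0 < a\<close> by real_asymp
  then have "\<forall>\<^sub>F s in at_right 0. 0 < ln (a / s)"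
    by (simp add: filterlim_at_top_dense)
  moreover have "\<forall>\<^sub>F s in at_right 0. 0 < s \<and> s \<le> \<epsilon>"
    using \<open>0 < \<epsilon>\<close> by (auto simp: eventually_at_right_field intro: exI[of _ \<epsilon>])
  ultimately show ?thesis
  proof eventually_elim
    case (elim s)
    show ?case
    proof (intro allI impI conjI)
      fix W :: real assume "0 < W" "width_eq_scaled \<kappa> d s W"
      note bounds = width_eq_scaled_bounds[OF \<kappa> \<open>0 < d\<close> _ this, folded a_def]
      show "W \<le> \<epsilon>" using bounds(1) elim by (simp add: w_def)
      show "s \<le> \<epsilon> * W"
        using bounds(2) elim mult_right_mono[of "q s" \<epsilon> W] \<open>0 < W\<close> by (simp add: q_def)
    qed (use elim in simp)
  qed
qed

section \<open>Roots of the dispersion relation\<close>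

text \<open>The dispersion relation is equivalent to \<open>exp (- 2 W / s * \<Lambda>) = dispersion_rhs \<kappa> s W \<Lambda>\<close>,
  whose right-hand side is close to \<open>- d\<close> when \<open>s\<close>, \<open>W\<close> and \<open>\<Lambda>\<close> are small.\<close>

definition dispersion_rhs :: "real \<Rightarrow> real \<Rightarrow> real \<Rightarrow> complex \<Rightarrow> complex" where
  "dispersion_rhs \<kappa> s W \<Lambda> =
     (let \<mu> = 1 + \<Lambda>; \<nu> = \<mu> - 1 / of_real \<kappa>
      in (of_real s - of_real (2 * W * \<kappa>) * \<mu> * \<nu> - of_real (\<kappa>\<^sup>2) * \<mu> * \<nu>\<^sup>2)
         / of_real (s * exp ((1 - \<kappa>) / (\<kappa> * s) * (2 * W))))"

lemma dispersion_root_of_exp_eq: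
  fixes \<kappa> s W :: real and \<Lambda> :: complex
  defines "\<mu> \<equiv> 1 + \<Lambda>" and "\<nu> \<equiv> 1 + \<Lambda> - 1 / of_real \<kappa>"
  assumes "\<kappa> \<noteq> 0" "s \<noteq> 0" and \<mu>: "\<mu> \<noteq> 0" and \<nu>: "\<nu> \<noteq> 0"
    and root: "exp (- of_real (2 * W / s) * \<Lambda>) = dispersion_rhs \<kappa> s W \<Lambda>"
  shows "dispersion \<kappa> s W \<Lambda> = of_real \<kappa>"
proof -
  define y where "y = (1 - \<kappa>) / (\<kappa> * s) * (2 * W)"
  have "- of_real (2 * W) * \<nu> / of_real s = of_real y + - of_real (2 * W / s) * \<Lambda>"
    using assms(3,4) by (simp add: \<nu>_def y_def field_simps)
  then have "exp (- of_real (2 * W) * \<nu> / of_real s) = of_real (exp y) * exp (- of_real (2 * W / s) * \<Lambda>)"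
    by (simp only: exp_add exp_of_real)
  also have "\<dots> = (of_real s - of_real (2 * W * \<kappa>) * \<mu> * \<nu> - of_real (\<kappa>\<^sup>2) * \<mu> * \<nu>\<^sup>2) / of_real s"
    unfolding root by (simp add: dispersion_rhs_def Let_def \<mu>_def \<nu>_def y_def)
  finally have one_minus_exp: "1 - exp (- of_real (2 * W) * \<nu> / of_real s)
      = (of_real (2 * W * \<kappa>) * \<mu> * \<nu> + of_real (\<kappa>\<^sup>2) * \<mu> * \<nu>\<^sup>2) / of_real s"
    using assms(4) by (simp add: field_simps)
  have "dispersion \<kappa> s W \<Lambda>
      = - of_real (2 * W) / \<nu> + of_real s / (of_real \<kappa> * \<mu> * \<nu>\<^sup>2) * (1 - exp (- of_real (2 * W) * \<nu> / of_real s))"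
    by (simp only: dispersion_def Let_def \<mu>_def \<nu>_def)
  also have "\<dots> = - of_real (2 * W) / \<nu> + of_real s / (of_real \<kappa> * \<mu> * \<nu>\<^sup>2)
      * ((of_real (2 * W * \<kappa>) * \<mu> * \<nu> + of_real (\<kappa>\<^sup>2) * \<mu> * \<nu>\<^sup>2) / of_real s)"
    by (simp only: one_minus_exp)
  also have "\<dots> = of_real \<kappa>"
    using assms(3,4) \<mu> \<nu> by (simp add: field_simps power2_eq_square)
  finally show ?thesis .
qed

lemma norm_cubic_remainder_le:
  fixes \<Lambda> :: complex and k :: real
  assumes "norm \<Lambda> \<le> 1" "0 \<le> k" "k \<le> 1"
  shows "norm ((1 + \<Lambda>) * (of_real k * \<Lambda> - of_real (1 - k))\<^sup>2 - of_real ((1 - k)\<^sup>2)) \<le> 2 * norm \<Lambda>"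
proof -
  define c where "c = 1 - k"
  have "0 \<le> c" using assms(3) by (simp add: c_def)
  then have "norm (of_real c :: complex) = c" "norm (2 * of_real c :: complex) = 2 * c"
    by (simp_all add: norm_mult)
  moreover have "norm (of_real k * \<Lambda>) \<le> k"
    using mult_left_le[OF assms(1,2)] assms(2) by (simp add: norm_mult)
  ultimately have "norm (of_real k * \<Lambda> - of_real c) \<le> 1" and "norm (of_real k * \<Lambda> - 2 * of_real c) \<le> 2 - k"
    using norm_triangle_ineq4[of "of_real k * \<Lambda>" "of_real c"]
      norm_triangle_ineq4[of "of_real k * \<Lambda>" "2 * of_real c"]
    by (simp_all add: c_def)
  then have "norm (\<Lambda> * (of_real k * \<Lambda> - of_real c)\<^sup>2) \<le> norm \<Lambda>"
    and "norm (of_real k * \<Lambda> * (of_real k * \<Lambda> - 2 * of_real c)) \<le> k * norm \<Lambda> * (2 - k)"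
    using assms(2) by (auto simp: norm_mult norm_power power_le_one mult_left_le mult_left_mono)
  moreover have "k * norm \<Lambda> * (2 - k) \<le> norm \<Lambda>"
    using zero_le_power2[of "k - 1"] mult_right_mono[of "k * (2 - k)" 1 "norm \<Lambda>"]
    by (auto simp: power2_eq_square algebra_simps)
  moreover have "(1 + \<Lambda>) * (of_real k * \<Lambda> - of_real c)\<^sup>2 - of_real (c\<^sup>2)
      = \<Lambda> * (of_real k * \<Lambda> - of_real c)\<^sup>2 + of_real k * \<Lambda> * (of_real k * \<Lambda> - 2 * of_real c)"
    by (simp add: power2_eq_square algebra_simps)
  ultimately have "norm ((1 + \<Lambda>) * (of_real k * \<Lambda> - of_real c)\<^sup>2 - of_real (c\<^sup>2)) \<le> 2 * norm \<Lambda>"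
    using norm_triangle_ineq[of "\<Lambda> * (of_real k * \<Lambda> - of_real c)\<^sup>2"
        "of_real k * \<Lambda> * (of_real k * \<Lambda> - 2 * of_real c)"]
    by simp
  then show ?thesis by (simp add: c_def)
qed

lemma norm_add_diff_diff_le:
  fixes a b c e :: "'a::real_normed_vector"
  shows "norm (a + b - c - e) \<le> norm a + norm b + norm c + norm e"
  using norm_triangle_ineq4[of "a + b - c" e] norm_triangle_ineq4[of "a + b" c] norm_triangle_ineq[of a b]
  by linarith

lemma norm_kappa_nu_le:
  fixes \<Lambda> :: complex
  assumes "norm \<Lambda> \<le> 1" "0 < \<kappa>" "\<kappa> < 1"
  shows "norm (of_real \<kappa> * (1 + \<Lambda> - 1 / of_real \<kappa>)) \<le> 1"
proof -
  have eq: "of_real \<kappa> * (1 + \<Lambda> - 1 / of_real \<kappa>) = of_real \<kappa> * \<Lambda> - of_real (1 - \<kappa>)"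
    using assms(2) by (simp add: field_simps)
  have "norm (of_real \<kappa> * \<Lambda>) \<le> \<kappa>"
    using assms mult_left_le[OF assms(1), of \<kappa>] by (simp add: norm_mult)
  moreover have "norm (of_real (1 - \<kappa>) :: complex) = 1 - \<kappa>"
    using assms(3) by (simp only: norm_of_real)
  ultimately show ?thesis
    unfolding eq using norm_triangle_ineq4[of "of_real \<kappa> * \<Lambda>" "of_real (1 - \<kappa>)"] by linarith
qed

lemma norm_dispersion_numerator_le:
  fixes \<kappa> d s W :: real and \<Lambda> :: complex
  defines "\<mu> \<equiv> 1 + \<Lambda>" and "\<nu> \<equiv> 1 + \<Lambda> - 1 / of_real \<kappa>"
  assumes \<kappa>: "0 < \<kappa>" "\<kappa> < 1" and "0 < d" "0 < s" "0 \<le> W" and \<Lambda>: "norm \<Lambda> \<le> 1"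
  shows "norm (of_real s - of_real (2 * W * \<kappa>) * \<mu> * \<nu> - of_real (\<kappa>\<^sup>2) * \<mu> * \<nu>\<^sup>2
                + of_real (d * s + (1 - \<kappa>)\<^sup>2 + d * (1 - \<kappa>) * (2 * W)))
         \<le> s * (1 + d) + 2 * (d + 2) * W + 2 * norm \<Lambda>"
proof -
  have \<kappa>\<nu>: "of_real \<kappa> * \<nu> = of_real \<kappa> * \<Lambda> - of_real (1 - \<kappa>)"
    using \<kappa> by (simp add: \<nu>_def field_simps)
  then have "of_real (\<kappa>\<^sup>2) * \<mu> * \<nu>\<^sup>2 = (1 + \<Lambda>) * (of_real \<kappa> * \<Lambda> - of_real (1 - \<kappa>))\<^sup>2"
    unfolding \<kappa>\<nu>[symmetric] \<mu>_def by (simp add: power2_eq_square)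
  then have eq: "of_real s - of_real (2 * W * \<kappa>) * \<mu> * \<nu> - of_real (\<kappa>\<^sup>2) * \<mu> * \<nu>\<^sup>2
                + of_real (d * s + (1 - \<kappa>)\<^sup>2 + d * (1 - \<kappa>) * (2 * W))
      = of_real (s * (1 + d)) + of_real (d * (1 - \<kappa>) * (2 * W)) - of_real (2 * W) * \<mu> * (of_real \<kappa> * \<nu>)
        - ((1 + \<Lambda>) * (of_real \<kappa> * \<Lambda> - of_real (1 - \<kappa>))\<^sup>2 - of_real ((1 - \<kappa>)\<^sup>2))"
    by (simp add: algebra_simps)
  have "norm (of_real (s * (1 + d)) :: complex) = s * (1 + d)"
    using \<open>0 < s\<close> \<open>0 < d\<close> by (simp only: norm_of_real) simp
  moreover have "norm (of_real (d * (1 - \<kappa>) * (2 * W)) :: complex) \<le> 2 * d * W"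
  proof -
    have "0 \<le> d * (1 - \<kappa>) * (2 * W)" using \<kappa> \<open>0 < d\<close> \<open>0 \<le> W\<close> by simp
    then have "norm (of_real (d * (1 - \<kappa>) * (2 * W)) :: complex) = d * (1 - \<kappa>) * (2 * W)"
      by (simp only: norm_of_real abs_of_nonneg)
    also have "\<dots> \<le> 2 * d * W" using \<kappa> \<open>0 < d\<close> \<open>0 \<le> W\<close> by (simp add: algebra_simps)
    finally show ?thesis .
  qed
  moreover have "norm (of_real (2 * W) * \<mu> * (of_real \<kappa> * \<nu>)) \<le> 2 * W * 2"
  proof -
    have "norm \<mu> * norm (of_real \<kappa> * \<nu>) \<le> 2 * 1"
      using \<Lambda> norm_triangle_ineq[of 1 \<Lambda>] norm_kappa_nu_le[OF \<Lambda> \<kappa>]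
      by (intro mult_mono) (auto simp: \<mu>_def \<nu>_def)
    then have "2 * W * (norm \<mu> * norm (of_real \<kappa> * \<nu>)) \<le> 2 * W * 2"
      using \<open>0 \<le> W\<close> by (intro mult_left_mono) auto
    then show ?thesis
      using \<open>0 \<le> W\<close> by (simp only: norm_mult norm_of_real)
  qed
  moreover note norm_cubic_remainder_le[OF \<Lambda> less_imp_le[OF \<kappa>(1)] less_imp_le[OF \<kappa>(2)]]
  moreover note norm_add_diff_diff_le[of "of_real (s * (1 + d))" "of_real (d * (1 - \<kappa>) * (2 * W))"
      "of_real (2 * W) * \<mu> * (of_real \<kappa> * \<nu>)"
      "(1 + \<Lambda>) * (of_real \<kappa> * \<Lambda> - of_real (1 - \<kappa>))\<^sup>2 - of_real ((1 - \<kappa>)\<^sup>2)"]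
  moreover have "2 * (d + 2) * W = 2 * d * W + 2 * W * 2" by (simp add: algebra_simps)
  ultimately show ?thesis unfolding eq by linarith
qed

lemma dispersion_rhs_residual_le:
  fixes \<kappa> d s W :: real and \<Lambda> :: complex
  assumes \<kappa>: "0 < \<kappa>" "\<kappa> < 1" and "0 < d" "0 < s" "0 \<le> W"
    and width: "width_eq_scaled \<kappa> d s W" and \<Lambda>: "norm \<Lambda> \<le> 1"
  shows "norm (dispersion_rhs \<kappa> s W \<Lambda> + of_real d)
         \<le> d / (1 - \<kappa>)\<^sup>2 * (s * (1 + d) + 2 * (d + 2) * W + 2 * norm \<Lambda>)"
proof -
  define Q where "Q = s * exp ((1 - \<kappa>) / (\<kappa> * s) * (2 * W))"
  define N where "N = of_real s - of_real (2 * W * \<kappa>) * (1 + \<Lambda>) * (1 + \<Lambda> - 1 / of_real \<kappa>)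
      - of_real (\<kappa>\<^sup>2) * (1 + \<Lambda>) * (1 + \<Lambda> - 1 / of_real \<kappa>)\<^sup>2
      + of_real (d * s + (1 - \<kappa>)\<^sup>2 + d * (1 - \<kappa>) * (2 * W))"
  have dQ: "d * Q = d * s + (1 - \<kappa>)\<^sup>2 + d * (1 - \<kappa>) * (2 * W)"
    unfolding Q_def using width_eq_scaled_cleared[OF width \<kappa>(1) \<open>0 < d\<close> \<open>0 < s\<close>] .
  have "0 \<le> d * (1 - \<kappa>) * (2 * W)" using \<open>0 < d\<close> \<kappa> \<open>0 \<le> W\<close> by simp
  then have "(1 - \<kappa>)\<^sup>2 \<le> d * Q" using dQ mult_pos_pos[OF \<open>0 < d\<close> \<open>0 < s\<close>] by linarith
  then have Q: "(1 - \<kappa>)\<^sup>2 / d \<le> Q" using \<open>0 < d\<close> by (simp add: pos_divide_le_eq mult.commute)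
  have "0 < Q" using \<open>0 < s\<close> by (simp add: Q_def)
  have "dispersion_rhs \<kappa> s W \<Lambda> = (N - of_real (d * Q)) / of_real Q"
    unfolding dispersion_rhs_def Let_def Q_def[symmetric] by (simp add: N_def dQ)
  then have "dispersion_rhs \<kappa> s W \<Lambda> + of_real d = N / of_real Q"
    using \<open>0 < Q\<close> by (simp add: field_simps)
  moreover have N: "norm N \<le> s * (1 + d) + 2 * (d + 2) * W + 2 * norm \<Lambda>"
    unfolding N_def using norm_dispersion_numerator_le[OF \<kappa> \<open>0 < d\<close> \<open>0 < s\<close> \<open>0 \<le> W\<close> \<Lambda>] .
  ultimately have "norm (dispersion_rhs \<kappa> s W \<Lambda> + of_real d)
                   \<le> (s * (1 + d) + 2 * (d + 2) * W + 2 * norm \<Lambda>) / ((1 - \<kappa>)\<^sup>2 / d)"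
    using Q \<open>0 < Q\<close> \<kappa> \<open>0 < d\<close> order_trans[OF norm_ge_zero N]
    by (simp only: norm_divide norm_of_real abs_of_pos) (rule frac_le, auto)
  then show ?thesis by (simp add: mult.commute)
qed

lemma exp_neg_root_with_margin:
  fixes d :: real
  assumes "0 < d" "d < 1"
  obtains u0 :: complex and r :: real
    where "exp (- u0) = - of_real d" "0 < r" "r \<le> 1/2" "r < Re u0"
proof
  let ?u0 = "- of_real (ln d) + \<i> * of_real pi :: complex"
  show "exp (- ?u0) = - of_real d"
    using assms by (simp add: exp_diff exp_of_real)
  have "ln d < 0" using assms by simp
  then show "0 < min (1/2) (- ln d / 2)" "min (1/2) (- ln d / 2) \<le> 1/2" "min (1/2) (- ln d / 2) < Re ?u0"
    by (auto simp: min_less_iff_disj)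
qed

lemma dispersion_root_of_scaled_root:
  fixes \<kappa> s W :: real and u :: complex
  assumes "0 < \<kappa>" "0 < s" "0 < W" "0 < Re u" and small: "norm u * (s / (2 * W)) < 1 / \<kappa> - 1"
    and root: "exp (- u) = dispersion_rhs \<kappa> s W (u * of_real (s / (2 * W)))"
  shows "\<exists>\<Lambda>. 0 < Re \<Lambda> \<and> 1 + \<Lambda> - 1 / of_real \<kappa> \<noteq> 0 \<and> dispersion \<kappa> s W \<Lambda> = of_real \<kappa>"
proof (intro exI conjI)
  let ?\<Lambda> = "u * of_real (s / (2 * W))"
  have "0 < s / (2 * W)" using assms(2,3) by simp
  then have norm_\<Lambda>: "norm ?\<Lambda> = norm u * (s / (2 * W))"
    by (simp only: norm_mult norm_of_real abs_of_pos)
  show "0 < Re ?\<Lambda>" using assms(2-4) by simp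
  then have "1 + ?\<Lambda> \<noteq> 0" by (auto simp: complex_eq_iff)
  show \<nu>: "1 + ?\<Lambda> - 1 / of_real \<kappa> \<noteq> 0"
  proof
    assume "1 + ?\<Lambda> - 1 / of_real \<kappa> = 0"
    then have "?\<Lambda> = of_real (1 / \<kappa> - 1)" by (simp add: algebra_simps)
    moreover have "0 \<le> norm u * (s / (2 * W))" using assms(2,3) by simp
    then have "0 < 1 / \<kappa> - 1" using small by linarith
    ultimately have "norm ?\<Lambda> = 1 / \<kappa> - 1" by (simp only: norm_of_real abs_of_pos)
    with small show False unfolding norm_\<Lambda> by linarith
  qed
  have "- of_real (2 * W / s) * ?\<Lambda> = - u" using assms(2,3) by simp
  with root show "dispersion \<kappa> s W ?\<Lambda> = of_real \<kappa>"
    using \<nu> \<open>1 + ?\<Lambda> \<noteq> 0\<close> assms(1,2) by (intro dispersion_root_of_exp_eq) auto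
qed

lemma dispersion_root_of_small_residual:
  fixes \<kappa> d s W r :: real and u0 :: complex
  defines "\<rho> \<equiv> (norm u0 + r) * (s / (2 * W))"
  assumes \<kappa>: "0 < \<kappa>" "\<kappa> < 1" and "0 < d" "0 < s" "0 < W" and width: "width_eq_scaled \<kappa> d s W"
    and u0: "exp (- u0) = - of_real d" and r: "0 < r" "r \<le> 1/2" "r < Re u0"
    and \<rho>: "\<rho> \<le> 1" "\<rho> < 1 / \<kappa> - 1"
    and residual: "d / (1 - \<kappa>)\<^sup>2 * (s * (1 + d) + 2 * (d + 2) * W + 2 * \<rho>) \<le> r / (2 * exp (Re u0 + r))"
  shows "\<exists>\<Lambda>. 0 < Re \<Lambda> \<and> 1 + \<Lambda> - 1 / of_real \<kappa> \<noteq> 0 \<and> dispersion \<kappa> s W \<Lambda> = of_real \<kappa>"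
proof -
  have small: "norm u * (s / (2 * W)) \<le> \<rho>" if "u \<in> cball u0 r" for u
  proof -
    have "norm u \<le> norm u0 + r"
      using that norm_triangle_ineq2[of u u0] by (simp add: dist_norm norm_minus_commute)
    then show ?thesis
      unfolding \<rho>_def using \<open>0 < s\<close> \<open>0 < W\<close> by (intro mult_right_mono) auto
  qed
  obtain u where u: "u \<in> cball u0 r" "exp (- u) = dispersion_rhs \<kappa> s W (u * of_real (s / (2 * W)))"
  proof (rule exp_neg_eq_perturbed_root[OF r(1,2) u0])
    show "continuous_on (cball u0 r) (\<lambda>u. dispersion_rhs \<kappa> s W (u * of_real (s / (2 * W))))"
      unfolding dispersion_rhs_def Let_def using \<open>0 < s\<close> by (intro continuous_intros) auto
  next
    fix v assume v: "v \<in> cball u0 r"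
    have "0 < s / (2 * W)" using \<open>0 < s\<close> \<open>0 < W\<close> by simp
    then have norm_v: "norm (v * of_real (s / (2 * W))) = norm v * (s / (2 * W))"
      by (simp only: norm_mult norm_of_real abs_of_pos)
    have "norm (dispersion_rhs \<kappa> s W (v * of_real (s / (2 * W))) + of_real d)
            \<le> d / (1 - \<kappa>)\<^sup>2 * (s * (1 + d) + 2 * (d + 2) * W + 2 * norm (v * of_real (s / (2 * W))))"
      by (rule dispersion_rhs_residual_le[OF \<kappa> \<open>0 < d\<close> \<open>0 < s\<close> _ width])
        (use \<open>0 < W\<close> small[OF v] \<rho>(1) in \<open>simp_all only: norm_v\<close>)
    also have "\<dots> \<le> d / (1 - \<kappa>)\<^sup>2 * (s * (1 + d) + 2 * (d + 2) * W + 2 * \<rho>)"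
      unfolding norm_v using small[OF v] \<open>0 < d\<close> by (intro mult_left_mono add_left_mono) auto
    finally show "norm (dispersion_rhs \<kappa> s W (v * of_real (s / (2 * W))) - - of_real d)
        \<le> r / (2 * exp (Re u0 + r))"
      using residual by simp
  qed
  moreover have "0 < Re u"
    using u(1) abs_Re_le_cmod[of "u0 - u"] r(3) by (simp add: dist_norm)
  ultimately show ?thesis
    using dispersion_root_of_scaled_root[OF \<kappa>(1) \<open>0 < s\<close> \<open>0 < W\<close>] small \<rho>(2) by force
qed

lemma dispersion_root_exists:
  fixes \<kappa> d :: real
  assumes \<kappa>: "0 < \<kappa>" "\<kappa> < 1" and d: "0 < d" "d < 1"
  shows "\<exists>\<epsilon>>0. \<forall>s W. 0 < s \<and> s \<le> \<epsilon> \<and> 0 < W \<and> W \<le> \<epsilon> \<and> s \<le> \<epsilon> * W \<and> width_eq_scaled \<kappa> d s W \<longrightarrow>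
           (\<exists>\<Lambda>. 0 < Re \<Lambda> \<and> 1 + \<Lambda> - 1 / of_real \<kappa> \<noteq> 0 \<and> dispersion \<kappa> s W \<Lambda> = of_real \<kappa>)"
proof -
  obtain u0 r where u0: "exp (- u0) = - of_real d" and r: "0 < r" "r \<le> 1/2" "r < Re u0"
    using exp_neg_root_with_margin[OF d] .
  define R where "R = norm u0 + r"
  define C where "C = d / (1 - \<kappa>)\<^sup>2 * (1 + d + 2 * (d + 2) + R)"
  have "((\<lambda>\<epsilon>. R * \<epsilon> / 2) \<longlongrightarrow> 0) (at_right 0)" "((\<lambda>\<epsilon>. C * \<epsilon>) \<longlongrightarrow> 0) (at_right 0)"
    by (auto intro!: tendsto_eq_intros)
  moreover have "0 < min 1 (1 / \<kappa> - 1)" "0 < r / (2 * exp (Re u0 + r))"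
    using \<kappa> r by (simp_all add: field_simps)
  ultimately have "\<forall>\<^sub>F \<epsilon> in at_right 0. R * \<epsilon> / 2 < min 1 (1 / \<kappa> - 1) \<and> C * \<epsilon> < r / (2 * exp (Re u0 + r))"
    by (intro eventually_conj order_tendstoD(2))
  then obtain b where "0 < b"
    and b: "\<And>\<epsilon>. 0 < \<epsilon> \<Longrightarrow> \<epsilon> < b \<Longrightarrow> R * \<epsilon> / 2 < min 1 (1 / \<kappa> - 1) \<and> C * \<epsilon> < r / (2 * exp (Re u0 + r))"
    unfolding eventually_at_right_field by auto
  define \<epsilon> where "\<epsilon> = b / 2"
  have "0 < \<epsilon>" "\<epsilon> < b" using \<open>0 < b\<close> by (simp_all add: \<epsilon>_def)
  with b have \<epsilon>: "R * \<epsilon> / 2 < min 1 (1 / \<kappa> - 1)" "C * \<epsilon> < r / (2 * exp (Re u0 + r))" by auto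
  show ?thesis
  proof (intro exI[of _ \<epsilon>] conjI allI impI \<open>0 < \<epsilon>\<close>)
    fix s W assume sW: "0 < s \<and> s \<le> \<epsilon> \<and> 0 < W \<and> W \<le> \<epsilon> \<and> s \<le> \<epsilon> * W \<and> width_eq_scaled \<kappa> d s W"
    have "0 < R" using r by (simp add: R_def add_nonneg_pos)
    have "s / (2 * W) \<le> \<epsilon> / 2" using sW by (simp add: field_simps)
    then have \<rho>: "R * (s / (2 * W)) \<le> R * \<epsilon> / 2"
      using mult_left_mono[of _ _ R] \<open>0 < R\<close> by fastforce
    have "d / (1 - \<kappa>)\<^sup>2 * (s * (1 + d) + 2 * (d + 2) * W + 2 * (R * (s / (2 * W))))
            \<le> d / (1 - \<kappa>)\<^sup>2 * (\<epsilon> * (1 + d) + 2 * (d + 2) * \<epsilon> + 2 * (R * \<epsilon> / 2))"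
      using sW \<rho> d by (intro mult_left_mono add_mono) auto
    also have "\<dots> = C * \<epsilon>" by (simp add: C_def algebra_simps)
    finally have residual: "d / (1 - \<kappa>)\<^sup>2 * (s * (1 + d) + 2 * (d + 2) * W + 2 * (R * (s / (2 * W))))
        \<le> r / (2 * exp (Re u0 + r))" using \<epsilon>(2) by linarith
    have "R * (s / (2 * W)) \<le> 1" "R * (s / (2 * W)) < 1 / \<kappa> - 1" using \<rho> \<epsilon>(1) by auto
    with residual sW show "\<exists>\<Lambda>. 0 < Re \<Lambda> \<and> 1 + \<Lambda> - 1 / of_real \<kappa> \<noteq> 0 \<and> dispersion \<kappa> s W \<Lambda> = of_real \<kappa>"
      unfolding R_def using dispersion_root_of_small_residual[OF \<kappa> d(1) _ _ _ u0 r] by blast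
  qed
qed

lemma eventually_dispersion_root:
  fixes \<kappa> d :: real
  assumes \<kappa>: "0 < \<kappa>" "\<kappa> < 1" and d: "0 < d" "d < 1"
  shows "\<forall>\<^sub>F s in at_right 0. \<forall>W>0. width_eq_scaled \<kappa> d s W \<longrightarrow>
           (\<exists>\<Lambda>. 0 < Re \<Lambda> \<and> 1 + \<Lambda> - 1 / of_real \<kappa> \<noteq> 0 \<and> dispersion \<kappa> s W \<Lambda> = of_real \<kappa>)"
proof -
  obtain \<epsilon> where "0 < \<epsilon>" and root: "\<forall>s W. 0 < s \<and> s \<le> \<epsilon> \<and> 0 < W \<and> W \<le> \<epsilon> \<and> s \<le> \<epsilon> * W \<and>
      width_eq_scaled \<kappa> d s W \<longrightarrow>
      (\<exists>\<Lambda>. 0 < Re \<Lambda> \<and> 1 + \<Lambda> - 1 / of_real \<kappa> \<noteq> 0 \<and> dispersion \<kappa> s W \<Lambda> = of_real \<kappa>)"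
    using dispersion_root_exists[OF \<kappa> d] by blast
  from eventually_width_small[OF \<kappa> d(1) \<open>0 < \<epsilon>\<close>] eventually_at_right_less[of 0]
  show ?thesis
    by eventually_elim (use root in blast)
qed

theorem corollary2p4:
  fixes \<kappa> \<Omega> \<delta> :: real
  assumes "0 < \<kappa>" and "\<kappa> < 1" and "\<Omega> \<noteq> 0" and "0 < \<delta>" and "\<delta> < 2"
  shows "\<exists>\<tau>0>0. \<forall>\<tau>. 0 < \<tau> \<and> \<tau> < \<tau>0 \<longrightarrow>
           (\<forall>W>0. width_eq \<kappa> \<Omega> \<delta> \<tau> W \<longrightarrow>
              (\<exists>lam. Re lam > 0 \<and> tw_eigenvalue \<kappa> \<Omega> \<tau> W lam))"
proof -
  have d: "0 < \<delta> / 2" "\<delta> / 2 < 1" using assms by auto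
  obtain b where "0 < b" and root: "\<forall>s>0. s < b \<longrightarrow> (\<forall>W>0. width_eq_scaled \<kappa> (\<delta> / 2) s W \<longrightarrow>
      (\<exists>\<Lambda>. 0 < Re \<Lambda> \<and> 1 + \<Lambda> - 1 / of_real \<kappa> \<noteq> 0 \<and> dispersion \<kappa> s W \<Lambda> = of_real \<kappa>))"
    using eventually_dispersion_root[OF assms(1,2) d] unfolding eventually_at_right_field by blast
  show ?thesis
  proof (intro exI[of _ "b / \<bar>\<Omega>\<bar>"] conjI allI impI)
    show "0 < b / \<bar>\<Omega>\<bar>" using \<open>0 < b\<close> assms(3) by simp
    fix \<tau> W assume \<tau>: "0 < \<tau> \<and> \<tau> < b / \<bar>\<Omega>\<bar>" and "0 < W" and "width_eq \<kappa> \<Omega> \<delta> \<tau> W"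
    define s where "s = \<tau> * \<bar>\<Omega>\<bar>"
    have s: "0 < s" "s < b" using \<tau> assms(3) by (auto simp: s_def pos_less_divide_eq)
    have "width_eq_scaled \<kappa> (\<delta> / 2) s W"
      using \<open>width_eq \<kappa> \<Omega> \<delta> \<tau> W\<close> width_eq_iff_scaled[of \<tau> \<Omega> \<kappa> \<delta> W] \<tau> assms by (simp add: s_def)
    then obtain \<Lambda> where \<Lambda>: "0 < Re \<Lambda>" "1 + \<Lambda> - 1 / of_real \<kappa> \<noteq> 0" "dispersion \<kappa> s W \<Lambda> = of_real \<kappa>"
      using root s \<open>0 < W\<close> by blast
    have "tw_eigenvalue \<kappa> \<bar>\<Omega>\<bar> \<tau> W (\<Lambda> / of_real \<tau>)"
      by (rule tw_eigenvalue_of_dispersion_root) (use assms \<tau> \<open>0 < W\<close> \<Lambda> in \<open>simp_all add: s_def\<close>)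
    then have "tw_eigenvalue \<kappa> \<Omega> \<tau> W (\<Lambda> / of_real \<tau>)"
      by (cases "0 < \<Omega>") (simp_all add: tw_eigenvalue_reflect)
    moreover have "0 < Re (\<Lambda> / of_real \<tau>)" using \<Lambda>(1) \<tau> by simp
    ultimately show "\<exists>lam. Re lam > 0 \<and> tw_eigenvalue \<kappa> \<Omega> \<tau> W lam" by blast
  qed
qed

end
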